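(* Let $S=\{0,1,a_0,a_1,a_2\}$ and consider the CA local rule $f$ of radius $1$ for undirected graphs (single vertex label, single edge label, edge relation symmetric) such that a vertex in state $i\in\{0,1\}$ takes state $1-i$, and a vertex in state $a_i$ takes state $0$ if it has a neighbor in a state from $\{0,1\}$ and state $a_{(i+1)\bmod 3}$ otherwise. Then for every nonempty undirected graph $G=(V,E)$ (finite or infinite), $G$ is connected if and only if $F_{G,f}$ has no configuration $c\in S^V$ of minimal period $6$, i.e. no $c$ with $F_{G,f}^6(c)=c$ and $F_{G,f}^j(c)\neq c$ for $1\le j\le 5$.
   Context: An undirected graph $G=(V,E)$ is viewed as a labeled graph with one vertex label and one edge label whose edge relation is symmetric. A CA local rule of radius $1$ determines the next state of a vertex from its current state and the set of states present among its neighbors; its global map $F_{G,f}:S^V\to S^V$ applies this rule simultaneously at every vertex. *)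

theory Defs
  imports Main
begin

datatype st = S0 | S1 | A0 | A1 | A2

fun rule13 :: "st \<Rightarrow> st set \<Rightarrow> st" where
  "rule13 S0 N = S1"
| "rule13 S1 N = S0"
| "rule13 A0 N = (if S0 \<in> N \<or> S1 \<in> N then S0 else A1)"
| "rule13 A1 N = (if S0 \<in> N \<or> S1 \<in> N then S0 else A2)"
| "rule13 A2 N = (if S0 \<in> N \<or> S1 \<in> N then S0 else A0)"

text \<open>Undirected graph: vertex set = the type 'v (any cardinality, nonempty),
  edge relation E (assumed symmetric in the theorem).  Global map F_{G,f}.\<close>
definition global_map ::
  "('v \<Rightarrow> 'v \<Rightarrow> bool) \<Rightarrow> ('s \<Rightarrow> 's set \<Rightarrow> 's) \<Rightarrow> ('v \<Rightarrow> 's) \<Rightarrow> ('v \<Rightarrow> 's)" where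
  "global_map E f c = (\<lambda>v. f (c v) {c u | u. E v u})"

definition graph_connected :: "('v \<Rightarrow> 'v \<Rightarrow> bool) \<Rightarrow> bool" where
  "graph_connected E \<longleftrightarrow> (\<forall>u v. E\<^sup>*\<^sup>* u v)"

definition has_min_period :: "('a \<Rightarrow> 'a) \<Rightarrow> nat \<Rightarrow> 'a \<Rightarrow> bool" where
  "has_min_period F p c \<longleftrightarrow> (F ^^ p) c = c \<and> (\<forall>j. 1 \<le> j \<and> j < p \<longrightarrow> (F ^^ j) c \<noteq> c)"

end

theory Submission
  imports Defs
begin

text \<open>The binary states 0, 1 are absorbing and infect every neighbour within one step.
  Hence on a periodic orbit the set of binary vertices is closed under adjacency, and as long
  as that holds the global map just advances every state along its own cycle
  (0 and 1 alternate, a_0, a_1, a_2 cycle with length 3).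
  On a connected graph the configuration is therefore entirely binary or entirely non-binary,
  with period dividing 2 or 3.  On a disconnected graph, putting 0 on one component and
  a_0 elsewhere gives period lcm(2, 3) = 6.\<close>

definition binary :: "st \<Rightarrow> bool" where
  "binary s \<longleftrightarrow> s = S0 \<or> s = S1"

fun succ_state :: "st \<Rightarrow> st" where
  "succ_state S0 = S1" | "succ_state S1 = S0"
| "succ_state A0 = A1" | "succ_state A1 = A2" | "succ_state A2 = A0"

lemma binary_succ_state_iff [simp]: "binary (succ_state s) \<longleftrightarrow> binary s"
  by (cases s) (simp_all add: binary_def)

lemma funpow_succ_state_binary: "binary s \<Longrightarrow> (succ_state ^^ 2) s = s"
  by (auto simp: binary_def numeral_2_eq_2)

lemma funpow_succ_state_non_binary: "\<not> binary s \<Longrightarrow> (succ_state ^^ 3) s = s"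
  by (cases s) (simp_all add: binary_def numeral_3_eq_3)

lemma funpow_succ_state_6: "(succ_state ^^ 6) s = s"
  by (cases s) (simp_all add: numeral_eq_Suc)

lemma funpow_succ_state_not_both_fixed:
  assumes "1 \<le> j" "j < 6"
  shows "(succ_state ^^ j) S0 \<noteq> S0 \<or> (succ_state ^^ j) A0 \<noteq> A0"
proof -
  have "j \<in> {1, 2, 3, 4, 5}" using assms by auto
  then show ?thesis by (auto simp: numeral_eq_Suc)
qed

lemma rule13_eq_succ_state:
  "binary s \<or> (\<forall>t\<in>N. \<not> binary t) \<Longrightarrow> rule13 s N = succ_state s"
  by (cases s) (auto simp: binary_def)

lemma binary_rule13: "t \<in> N \<Longrightarrow> binary t \<Longrightarrow> binary (rule13 s N)"
  by (cases s) (auto simp: binary_def)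

lemma binary_global_map_neighbour:
  "E v w \<Longrightarrow> binary (c w) \<Longrightarrow> binary (global_map E rule13 c v)"
  unfolding global_map_def by (blast intro: binary_rule13)

lemma binary_funpow_global_map:
  "binary (c v) \<Longrightarrow> binary ((global_map E rule13 ^^ n) c v)"
proof (induction n)
  case (Suc n)
  then show ?case
    by (simp add: global_map_def rule13_eq_succ_state)
qed simp

definition binary_closed :: "('v \<Rightarrow> 'v \<Rightarrow> bool) \<Rightarrow> ('v \<Rightarrow> st) \<Rightarrow> bool" where
  "binary_closed E c \<longleftrightarrow> (\<forall>v w. E v w \<longrightarrow> binary (c w) \<longrightarrow> binary (c v))"

lemma global_map_binary_closed:
  assumes "binary_closed E c"
  shows "global_map E rule13 c = succ_state \<circ> c"
proof
  fix v
  have "binary (c v) \<or> (\<forall>t\<in>{c w | w. E v w}. \<not> binary t)"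
    using assms unfolding binary_closed_def by blast
  then show "global_map E rule13 c v = (succ_state \<circ> c) v"
    unfolding global_map_def by (simp add: rule13_eq_succ_state)
qed

lemma binary_closed_succ_state: "binary_closed E c \<Longrightarrow> binary_closed E (succ_state \<circ> c)"
  by (simp add: binary_closed_def)

lemma funpow_global_map_binary_closed:
  "binary_closed E c \<Longrightarrow> (global_map E rule13 ^^ n) c = (succ_state ^^ n) \<circ> c"
proof (induction n arbitrary: c)
  case (Suc n)
  have "(global_map E rule13 ^^ Suc n) c = (global_map E rule13 ^^ n) (succ_state \<circ> c)"
    using Suc.prems by (simp add: funpow_Suc_right global_map_binary_closed del: funpow.simps)
  also have "\<dots> = (succ_state ^^ n) \<circ> (succ_state \<circ> c)"
    by (rule Suc.IH[OF binary_closed_succ_state[OF Suc.prems]])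
  also have "\<dots> = (succ_state ^^ Suc n) \<circ> c"
    by (simp only: funpow_Suc_right comp_assoc)
  finally show ?case .
qed simp

lemma periodic_binary_closed:
  assumes "(global_map E rule13 ^^ Suc n) c = c"
  shows "binary_closed E c"
  unfolding binary_closed_def
proof (intro allI impI)
  fix v w
  assume "E v w" "binary (c w)"
  then have "binary ((global_map E rule13 ^^ n) (global_map E rule13 c) v)"
    by (intro binary_funpow_global_map binary_global_map_neighbour)
  then show "binary (c v)"
    using assms by (simp add: funpow_Suc_right del: funpow.simps)
qed

lemma binary_closed_connected:
  assumes "symp E" "graph_connected E" "binary_closed E c"
  shows "(\<forall>v. binary (c v)) \<or> (\<forall>v. \<not> binary (c v))"
proof (rule ccontr)
  assume "\<not> ?thesis"
  then obtain u v where "binary (c u)" "\<not> binary (c v)" by blast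
  moreover have "E\<^sup>*\<^sup>* v u"
    using assms(2) unfolding graph_connected_def by blast
  then have "binary (c u) \<Longrightarrow> binary (c v)"
  proof (induction rule: converse_rtranclp_induct)
    case (step x y)
    then show ?case using assms(3) unfolding binary_closed_def by blast
  qed
  ultimately show False by blast
qed

lemma connected_no_min_period_6:
  assumes "symp E" "graph_connected E"
  shows "\<not> has_min_period (global_map E rule13) 6 c"
proof
  assume per: "has_min_period (global_map E rule13) 6 c"
  then have closed: "binary_closed E c"
    by (intro periodic_binary_closed[where n=5]) (simp add: has_min_period_def numeral_eq_Suc)
  consider "\<forall>v. binary (c v)" | "\<forall>v. \<not> binary (c v)"
    using binary_closed_connected[OF assms closed] by blast
  then obtain j :: nat where "j \<in> {2, 3}" "(succ_state ^^ j) \<circ> c = c"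
    by cases (force simp: funpow_succ_state_binary funpow_succ_state_non_binary)+
  then show False
    using per funpow_global_map_binary_closed[OF closed, of j]
    unfolding has_min_period_def by auto
qed

lemma disconnected_min_period_6:
  assumes "symp E" "\<not> E\<^sup>*\<^sup>* u v"
  defines "c \<equiv> \<lambda>w. if E\<^sup>*\<^sup>* u w then S0 else A0"
  shows "has_min_period (global_map E rule13) 6 c"
proof -
  have "binary_closed E c"
    unfolding binary_closed_def c_def binary_def
    using assms(1) by (auto intro: rtranclp.rtrancl_into_rtrancl dest: sympD)
  then have iter: "(global_map E rule13 ^^ j) c = (succ_state ^^ j) \<circ> c" for j
    by (rule funpow_global_map_binary_closed)
  have "(global_map E rule13 ^^ j) c \<noteq> c" if "1 \<le> j" "j < 6" for j
  proof
    assume "(global_map E rule13 ^^ j) c = c"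
    then have "(succ_state ^^ j) (c u) = c u" "(succ_state ^^ j) (c v) = c v"
      unfolding iter by (metis comp_apply)+
    then show False
      using funpow_succ_state_not_both_fixed[OF that] assms(2) by (simp add: c_def)
  qed
  then show ?thesis
    unfolding has_min_period_def iter by (simp add: funpow_succ_state_6 comp_def)
qed

theorem mainTheorem13:
  fixes E :: "'v \<Rightarrow> 'v \<Rightarrow> bool"
  assumes "symp E"
  shows "graph_connected E \<longleftrightarrow>
         \<not> (\<exists>c :: 'v \<Rightarrow> st. has_min_period (global_map E rule13) 6 c)"
  using connected_no_min_period_6[OF assms] disconnected_min_period_6[OF assms]
  unfolding graph_connected_def by blast

end
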